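(* Fix $\tau$ in the upper half plane. The meromorphic function $$\mathfrak{Z}(x,y,z)=\wp(x-y)\bigl[\zeta(x-y)+\zeta(y-z)+\zeta(z-x)\bigr]+\tfrac12\wp'(x-y)$$ on $\mathbb{C}^3$ is cyclically symmetric: $\mathfrak{Z}(x,y,z)=\mathfrak{Z}(y,z,x)$.
   Context: $q=e^{2\pi i\tau}$. $\wp(z)=\wp(z,q)=z^{-2}+\sum_{k\ge0}(2k+1)G_{2k+2}z^{2k}$ and $\zeta(z)=\zeta(z,q)=z^{-1}-\sum_{k\ge0}G_{2k+2}z^{2k+1}$, where for even $k\ge2$, $G_k=(2\pi i)^k\bigl(-\frac{B_k}{k!}+\frac{2}{(k-1)!}\sum_{n\ge1}n^{k-1}\frac{q^n}{1-q^n}\bigr)$ ($B_k$ Bernoulli numbers, $t/(e^t-1)=\sum B_nt^n/n!$). Thus $\wp$ is the Weierstrass $\wp$-function of the lattice $\mathbb{Z}+\mathbb{Z}\tau$ plus the constant $G_2$, $\zeta$ is the corresponding quasi-elliptic function with $\wp=-\zeta'$, and $\wp'=\partial_z\wp$. *)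

theory Defs
  imports "HOL-Analysis.Analysis"
begin

definition latt :: "complex \<Rightarrow> int \<times> int \<Rightarrow> complex" where
  "latt \<tau> p = of_int (fst p) + of_int (snd p) * \<tau>"

definition wpW :: "complex \<Rightarrow> complex \<Rightarrow> complex" where
  "wpW \<tau> z = 1 / z^2 +
     (\<Sum>\<^sub>\<infinity>p\<in>UNIV - {(0,0)}. 1 / (z - latt \<tau> p)^2 - 1 / (latt \<tau> p)^2)"

definition zetaW :: "complex \<Rightarrow> complex \<Rightarrow> complex" where
  "zetaW \<tau> z = 1 / z +
     (\<Sum>\<^sub>\<infinity>p\<in>UNIV - {(0,0)}. 1 / (z - latt \<tau> p) + 1 / latt \<tau> p + z / (latt \<tau> p)^2)"

text \<open>G_2 = (2 pi i)^2 (-B_2/2! + 2 sum_{n>=1} n q^n/(1-q^n)), q = exp(2 pi i tau), B_2 = 1/6.\<close>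
definition G2 :: "complex \<Rightarrow> complex" where
  "G2 \<tau> = (let q = exp (2 * of_real pi * \<i> * \<tau>) in
     (2 * of_real pi * \<i>)^2 * (- (1/6) / 2 +
        2 * (\<Sum>n. of_nat (Suc n) * q ^ Suc n / (1 - q ^ Suc n))))"

text \<open>The paper's normalisations: wp = wpW + G_2, zeta = zetaW - G_2 z.\<close>
definition wp :: "complex \<Rightarrow> complex \<Rightarrow> complex" where
  "wp \<tau> z = wpW \<tau> z + G2 \<tau>"

definition zeta :: "complex \<Rightarrow> complex \<Rightarrow> complex" where
  "zeta \<tau> z = zetaW \<tau> z - G2 \<tau> * z"

definition wp' :: "complex \<Rightarrow> complex \<Rightarrow> complex" where
  "wp' \<tau> z = deriv (wp \<tau>) z"

definition frakZ :: "complex \<Rightarrow> complex \<Rightarrow> complex \<Rightarrow> complex \<Rightarrow> complex" where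
  "frakZ \<tau> x y z = wp \<tau> (x - y) * (zeta \<tau> (x - y) + zeta \<tau> (y - z) + zeta \<tau> (z - x))
                    + wp' \<tau> (x - y) / 2"

end

theory Submission
  imports Defs "HOL-Complex_Analysis.Complex_Analysis"
begin

text \<open>
  With \<open>a = x - y\<close> and \<open>b = y - z\<close>, and using that \<open>\<zeta>\<close> is odd (the constant \<open>G\<^sub>2\<close> cancels),
  the cyclic symmetry is the addition theorem
  \<open>(\<wp>(a) - \<wp>(b)) (\<zeta>(a + b) - \<zeta>(a) - \<zeta>(b)) = (\<wp>'(a) - \<wp>'(b)) / 2\<close>
  for the Weierstrass functions of the lattice.
  As a function of \<open>a\<close>, the difference of the two sides is doubly periodic, since \<open>\<wp>\<close> and \<open>\<wp>'\<close> are
  periodic and \<open>\<zeta>\<close> is quasi-periodic. Its singularities at the lattice points and at \<open>-b\<close> plus the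
  lattice are removable: at \<open>a = 0\<close> the poles of order three, two and one cancel and the difference
  tends to \<open>0\<close>. By Liouville's theorem it vanishes identically.
\<close>

definition lattice :: "complex \<Rightarrow> complex set" where
  "lattice \<tau> = range (latt \<tau>)"

lemma latt_add [simp]: "latt \<tau> (p + q) = latt \<tau> p + latt \<tau> q"
  and latt_diff [simp]: "latt \<tau> (p - q) = latt \<tau> p - latt \<tau> q"
  and latt_uminus [simp]: "latt \<tau> (- p) = - latt \<tau> p"
  by (simp_all add: latt_def algebra_simps)

lemma latt_zero [simp]: "latt \<tau> (0, 0) = 0"
  by (simp add: latt_def)

lemma zero_in_lattice [simp]: "0 \<in> lattice \<tau>"
  unfolding lattice_def by (metis latt_zero rangeI)

lemma latt_norm_lower_bound:
  assumes "Im \<tau> > 0"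
  obtains c where "c > 0"
    "\<And>p. c * (\<bar>real_of_int (fst p)\<bar> + \<bar>real_of_int (snd p)\<bar>) \<le> norm (latt \<tau> p)"
proof
  define c where "c = Im \<tau> / (Im \<tau> + norm \<tau> + 1)"
  show "c > 0"
    using assms by (simp add: c_def add_pos_nonneg)
  fix p :: "int \<times> int"
  obtain m n where p: "p = (m, n)" by (cases p)
  let ?w = "latt \<tau> p"
  have "\<bar>real_of_int n\<bar> * Im \<tau> \<le> norm ?w"
    using abs_Im_le_cmod[of ?w] assms by (simp add: latt_def p abs_mult)
  then have n: "\<bar>real_of_int n\<bar> \<le> norm ?w / Im \<tau>"
    using assms by (simp add: field_simps)
  have "\<bar>real_of_int m\<bar> = \<bar>Re ?w - of_int n * Re \<tau>\<bar>"
    by (simp add: latt_def p)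
  also have "\<dots> \<le> norm ?w + \<bar>real_of_int n\<bar> * norm \<tau>"
    by (metis abs_Re_le_cmod abs_mult abs_triangle_ineq4 add_mono abs_ge_zero mult_left_mono order.trans)
  finally have "\<bar>real_of_int m\<bar> + \<bar>real_of_int n\<bar> \<le> norm ?w + \<bar>real_of_int n\<bar> * (norm \<tau> + 1)"
    by (simp add: algebra_simps)
  also have "\<dots> \<le> norm ?w + norm ?w / Im \<tau> * (norm \<tau> + 1)"
    using n by (intro add_left_mono mult_right_mono) auto
  also have "\<dots> = norm ?w / c"
    using assms by (simp add: c_def field_simps)
  finally show "c * (\<bar>real_of_int (fst p)\<bar> + \<bar>real_of_int (snd p)\<bar>) \<le> norm ?w"
    using \<open>c > 0\<close> by (simp add: p field_simps)
qed

lemma finite_latt_bounded: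
  assumes "Im \<tau> > 0"
  shows "finite {p. norm (latt \<tau> p) \<le> T}"
proof -
  obtain c where c: "c > 0"
    "\<And>p. c * (\<bar>real_of_int (fst p)\<bar> + \<bar>real_of_int (snd p)\<bar>) \<le> norm (latt \<tau> p)"
    using latt_norm_lower_bound[OF assms] by blast
  define N where "N = \<lceil>T / c\<rceil>"
  have "{p. norm (latt \<tau> p) \<le> T} \<subseteq> {-N..N} \<times> {-N..N}"
  proof safe
    fix m n assume "norm (latt \<tau> (m, n)) \<le> T"
    then have "\<bar>real_of_int m\<bar> + \<bar>real_of_int n\<bar> \<le> T / c"
      using c(1) c(2)[of "(m, n)"] by (simp add: field_simps)
    moreover have "T / c \<le> of_int N"
      unfolding N_def by (rule le_of_int_ceiling)
    ultimately show "m \<in> {-N..N}" "n \<in> {-N..N}"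
      by (simp_all add: abs_le_iff) linarith+
  qed
  then show ?thesis
    by (rule finite_subset) auto
qed

lemma latt_nonzero_norm_lower_bound:
  assumes "Im \<tau> > 0"
  obtains \<delta> where "\<delta> > 0" "\<And>p. p \<noteq> (0, 0) \<Longrightarrow> \<delta> \<le> norm (latt \<tau> p)"
proof -
  obtain c where c: "c > 0"
    "\<And>p. c * (\<bar>real_of_int (fst p)\<bar> + \<bar>real_of_int (snd p)\<bar>) \<le> norm (latt \<tau> p)"
    using latt_norm_lower_bound[OF assms] by blast
  have "c \<le> norm (latt \<tau> p)" if "p \<noteq> (0, 0)" for p
  proof -
    have "1 \<le> \<bar>real_of_int (fst p)\<bar> + \<bar>real_of_int (snd p)\<bar>"
      using that by (cases p) auto
    then have "c * 1 \<le> c * (\<bar>real_of_int (fst p)\<bar> + \<bar>real_of_int (snd p)\<bar>)"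
      using c(1) by (intro mult_left_mono) auto
    then show ?thesis
      using c(2)[of p] by simp
  qed
  with c(1) that show ?thesis by blast
qed

lemma latt_eq_0_iff:
  assumes "Im \<tau> > 0"
  shows "latt \<tau> p = 0 \<longleftrightarrow> p = (0, 0)"
  using latt_nonzero_norm_lower_bound[OF assms] by (metis latt_zero norm_zero not_le)

lemma closed_latt_image:
  assumes "Im \<tau> > 0"
  shows "closed (latt \<tau> ` P)"
proof -
  obtain \<delta> where \<delta>: "\<delta> > 0" "\<And>p. p \<noteq> (0, 0) \<Longrightarrow> \<delta> \<le> norm (latt \<tau> p)"
    using latt_nonzero_norm_lower_bound[OF assms] by blast
  show ?thesis
  proof (rule discrete_imp_closed[OF \<delta>(1)], safe)
    fix p q assume "dist (latt \<tau> q) (latt \<tau> p) < \<delta>"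
    then have "norm (latt \<tau> (q - p)) < \<delta>"
      by (simp add: dist_norm)
    then have "q - p = (0, 0)"
      using \<delta>(2) by (meson not_le)
    then have "q = p"
      by (simp add: prod_eq_iff)
    then show "latt \<tau> q = latt \<tau> p"
      by simp
  qed
qed

lemma open_lattice_compl: "Im \<tau> > 0 \<Longrightarrow> open (- lattice \<tau>)"
  by (simp add: lattice_def closed_latt_image open_Compl)

lemma connected_lattice_compl: "connected (- lattice \<tau>)"
  using connected_open_diff_countable[of UNIV "lattice \<tau>"]
  by (simp add: lattice_def Compl_eq_Diff_UNIV connected_UNIV)

lemma uminus_in_lattice_iff [simp]: "- z \<in> lattice \<tau> \<longleftrightarrow> z \<in> lattice \<tau>"
proof -
  have "- z \<in> lattice \<tau>" if "z \<in> lattice \<tau>" for z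
  proof -
    from that obtain p where "z = latt \<tau> p" by (auto simp: lattice_def)
    then have "- z = latt \<tau> (- p)" by simp
    then show ?thesis unfolding lattice_def by blast
  qed
  from this[of z] this[of "- z"] show ?thesis by auto
qed

lemma add_latt_in_lattice_iff [simp]: "z + latt \<tau> q \<in> lattice \<tau> \<longleftrightarrow> z \<in> lattice \<tau>"
proof
  assume "z + latt \<tau> q \<in> lattice \<tau>"
  then obtain p where "z + latt \<tau> q = latt \<tau> p" by (auto simp: lattice_def)
  then have "z = latt \<tau> (p - q)" by (simp add: algebra_simps)
  then show "z \<in> lattice \<tau>" unfolding lattice_def by blast
next
  assume "z \<in> lattice \<tau>"
  then obtain p where "z = latt \<tau> p" by (auto simp: lattice_def)
  then have "z + latt \<tau> q = latt \<tau> (p + q)" by simp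
  then show "z + latt \<tau> q \<in> lattice \<tau>" unfolding lattice_def by blast
qed

lemma half_generators_notin_lattice:
  assumes "Im \<tau> > 0"
  shows "1 / 2 \<notin> lattice \<tau>" "\<tau> / 2 \<notin> lattice \<tau>"
proof -
  have odd: False if "2 * k = (1 :: int)" for k
    using that by presburger
  show "1 / 2 \<notin> lattice \<tau>"
  proof
    assume "1 / 2 \<in> lattice \<tau>"
    then obtain m n where mn: "of_int m + of_int n * \<tau> = 1 / 2"
      unfolding lattice_def latt_def by force
    then have "of_int n * Im \<tau> = 0"
      using arg_cong[OF mn, of Im] by simp
    then have "real_of_int (2 * m) = 1"
      using arg_cong[OF mn, of Re] assms by simp
    then show False
      using odd[of m] by linarith
  qed
  show "\<tau> / 2 \<notin> lattice \<tau>"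
  proof
    assume "\<tau> / 2 \<in> lattice \<tau>"
    then obtain m n where mn: "of_int m + of_int n * \<tau> = \<tau> / 2"
      unfolding lattice_def latt_def by force
    then have "(2 * real_of_int n - 1) * Im \<tau> = 0"
      using arg_cong[OF mn, of Im] by (simp add: algebra_simps)
    then have "real_of_int (2 * n) = 1"
      using assms by simp
    then show False
      using odd[of n] by linarith
  qed
qed

section \<open>Absolute convergence of lattice sums\<close>

lemma summable_on_int_powr:
  assumes "s > 1"
  shows "(\<lambda>k::int. (1 + \<bar>real_of_int k\<bar>) powr (- s)) summable_on UNIV"
proof -
  let ?f = "\<lambda>k::int. (1 + \<bar>real_of_int k\<bar>) powr (- s)"
  have "summable (\<lambda>n::nat. real n powr (- s))"
    using assms by (simp add: summable_real_powr_iff)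
  then have "summable (\<lambda>n::nat. real (Suc n) powr (- s))"
    by (subst summable_Suc_iff)
  then have nat: "(\<lambda>n::nat. real (Suc n) powr (- s)) summable_on UNIV"
    by (rule summable_nonneg_imp_summable_on) simp
  have "(?f \<circ> int) = (\<lambda>n. real (Suc n) powr (- s))"
    "(?f \<circ> (\<lambda>n. - int n)) = (\<lambda>n. real (Suc n) powr (- s))"
    by (auto simp: add.commute)
  with nat have "?f summable_on range int" "?f summable_on range (\<lambda>n. - int n)"
    by (simp_all add: summable_on_reindex inj_on_def)
  then have "?f summable_on (range int \<union> range (\<lambda>n. - int n))"
    by (rule summable_on_union)
  moreover have "k \<in> range int \<union> range (\<lambda>n. - int n)" for k :: int
    by (cases "k \<ge> 0") (auto intro: range_eqI[where x = "nat k"] range_eqI[where x = "nat (- k)"])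
  then have "range int \<union> range (\<lambda>n. - int n) = UNIV"
    by blast
  ultimately show ?thesis by simp
qed

lemma inverse_cube_le_powr_prod:
  fixes a b :: real
  assumes "a \<ge> 0" "b \<ge> 0"
  shows "1 / (1 + a + b) ^ 3 \<le> (1 + a) powr (- 3 / 2) * (1 + b) powr (- 3 / 2)"
proof -
  have "(1 + a) * (1 + b) \<le> (1 + a + b) ^ 2"
    using assms by (simp add: power2_eq_square algebra_simps)
  then have "((1 + a + b) ^ 2) powr (- 3 / 2) \<le> ((1 + a) * (1 + b)) powr (- 3 / 2)"
    using assms by (intro powr_mono2') auto
  also have "((1 + a + b) ^ 2) powr (- 3 / 2) = ((1 + a + b) powr 2) powr (- 3 / 2)"
    using assms by (simp add: powr_numeral)
  also have "\<dots> = inverse ((1 + a + b) powr 3)"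
    by (simp add: powr_powr powr_minus)
  also have "\<dots> = 1 / (1 + a + b) ^ 3"
    using assms by (simp add: powr_numeral divide_inverse)
  finally show ?thesis
    using assms by (simp add: powr_mult)
qed

lemma latt_inverse_cube_summable:
  assumes "Im \<tau> > 0"
  shows "(\<lambda>p. 1 / norm (latt \<tau> p) ^ 3) summable_on (UNIV - {(0, 0)})"
proof -
  obtain c where c: "c > 0"
    "\<And>p. c * (\<bar>real_of_int (fst p)\<bar> + \<bar>real_of_int (snd p)\<bar>) \<le> norm (latt \<tau> p)"
    using latt_norm_lower_bound[OF assms] by blast
  define \<phi> where "\<phi> k = (1 + \<bar>real_of_int k\<bar>) powr (- 3 / 2)" for k :: int
  have \<phi>: "\<phi> summable_on UNIV"
    using summable_on_int_powr[of "3 / 2"] by (simp add: \<phi>_def[abs_def])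
  have "(\<lambda>p. \<phi> (fst p) * \<phi> (snd p)) summable_on UNIV \<times> UNIV"
  proof (rule summable_on_SigmaI)
    show "((\<lambda>n. \<phi> (fst (m, n)) * \<phi> (snd (m, n))) has_sum \<phi> m * infsum \<phi> UNIV) UNIV" for m
      using \<phi> by (simp add: has_sum_cmult_right)
    show "(\<lambda>m. \<phi> m * infsum \<phi> UNIV) summable_on UNIV"
      using \<phi> by (rule summable_on_cmult_left)
  qed (auto simp: \<phi>_def)
  then have "(\<lambda>p. (2 / c) ^ 3 * (\<phi> (fst p) * \<phi> (snd p))) summable_on (UNIV - {(0, 0)})"
    by (auto intro: summable_on_cmult_right summable_on_subset)
  then show ?thesis
  proof (rule summable_on_comparison_test)
    fix p :: "int \<times> int" assume p: "p \<in> UNIV - {(0, 0)}"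
    define s where "s = \<bar>real_of_int (fst p)\<bar> + \<bar>real_of_int (snd p)\<bar>"
    have "s \<ge> 1"
      using p by (cases p) (auto simp: s_def)
    then have "c * (1 + s) \<le> c * (2 * s)"
      using c(1) by (intro mult_left_mono) auto
    also have "\<dots> \<le> 2 * norm (latt \<tau> p)"
      using c(2)[of p] unfolding s_def by linarith
    finally have "c * (1 + s) \<le> 2 * norm (latt \<tau> p)" .
    then have "1 + s \<le> (2 / c) * norm (latt \<tau> p)"
      using c(1) by (simp add: field_simps)
    moreover have "norm (latt \<tau> p) > 0"
      using \<open>c * (1 + s) \<le> 2 * norm (latt \<tau> p)\<close> \<open>s \<ge> 1\<close> c(1)
      by (smt (verit) mult_pos_pos)
    ultimately have "(1 + s) ^ 3 \<le> ((2 / c) * norm (latt \<tau> p)) ^ 3"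
      using \<open>s \<ge> 1\<close> by (intro power_mono) auto
    then have "1 / norm (latt \<tau> p) ^ 3 \<le> (2 / c) ^ 3 / (1 + s) ^ 3"
      using \<open>s \<ge> 1\<close> c(1) \<open>norm (latt \<tau> p) > 0\<close> by (simp add: field_simps power_mult_distrib)
    also have "\<dots> = (2 / c) ^ 3 * (1 / (1 + s) ^ 3)"
      by simp
    also have "\<dots> \<le> (2 / c) ^ 3 * (\<phi> (fst p) * \<phi> (snd p))"
      using inverse_cube_le_powr_prod[of "\<bar>real_of_int (fst p)\<bar>" "\<bar>real_of_int (snd p)\<bar>"] c(1)
      by (intro mult_left_mono) (simp_all add: s_def \<phi>_def add.assoc)
    finally show "1 / norm (latt \<tau> p) ^ 3 \<le> (2 / c) ^ 3 * (\<phi> (fst p) * \<phi> (snd p))" .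
  qed simp
qed

lemma infsum_reindex_uminus:
  fixes g :: "'a::group_add \<Rightarrow> 'b::{comm_monoid_add, t2_space}"
  assumes "uminus ` A = A"
  shows "(\<Sum>\<^sub>\<infinity>p\<in>A. g (- p)) = (\<Sum>\<^sub>\<infinity>p\<in>A. g p)"
  using assms by (intro infsum_reindex_bij_betw) (simp add: bij_betw_def)

lemma infsum_odd_eq_0:
  fixes g :: "'a::group_add \<Rightarrow> 'b::real_normed_vector"
  assumes "uminus ` A = A" "\<And>p. g (- p) = - g p"
  shows "(\<Sum>\<^sub>\<infinity>p\<in>A. g p) = 0"
proof -
  have "(\<Sum>\<^sub>\<infinity>p\<in>A. g p) = (\<Sum>\<^sub>\<infinity>p\<in>A. - g p)"
    using infsum_reindex_uminus[OF assms(1), of g] assms(2) by simp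
  also have "\<dots> = - (\<Sum>\<^sub>\<infinity>p\<in>A. g p)"
    by (rule infsum_uminus)
  finally have "2 *\<^sub>R (\<Sum>\<^sub>\<infinity>p\<in>A. g p) = 0"
    by (simp add: scaleR_2 eq_neg_iff_add_eq_0)
  then show ?thesis
    by simp
qed

lemma uminus_image_nonzero_pairs: "uminus ` (UNIV - {(0::int, 0::int)}) = UNIV - {(0, 0)}"
proof -
  have "bij_betw uminus (UNIV - {(0::int, 0::int)}) (UNIV - {(0, 0)})"
    by (rule bij_betwI[of _ _ _ uminus]) (auto simp: minus_prod_def)
  then show ?thesis
    by (rule bij_betw_imp_surj_on)
qed

section \<open>Termwise differentiation of lattice sums\<close>

lemma infsum_split_finite:
  fixes f :: "'i \<Rightarrow> 'a::banach"
  assumes "f summable_on I" "finite X" "X \<subseteq> I"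
  shows "infsum f I = sum f X + infsum f (I - X)"
proof -
  have "infsum f (X \<union> (I - X)) = infsum f X + infsum f (I - X)"
    using assms summable_on_subset_banach[OF assms(1) Diff_subset] by (intro infsum_Un_disjoint) auto
  moreover have "X \<union> (I - X) = I"
    using assms by auto
  ultimately show ?thesis
    using assms by simp
qed

lemma uniform_limit_infsum:
  fixes g :: "'i \<Rightarrow> 'a \<Rightarrow> 'b::banach"
  assumes M: "M summable_on I"
    and bound: "\<And>p v. p \<in> I \<Longrightarrow> v \<in> S \<Longrightarrow> norm (g p v) \<le> M p"
  shows "uniform_limit S (\<lambda>X v. \<Sum>p\<in>X. g p v) (\<lambda>v. \<Sum>\<^sub>\<infinity>p\<in>I. g p v) (finite_subsets_at_top I)"
  unfolding uniform_limit_iff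
proof (intro allI impI)
  fix e :: real assume "e > 0"
  have norm_summable: "(\<lambda>p. norm (g p v)) summable_on J" if "v \<in> S" "J \<subseteq> I" for v J
    using that by (intro summable_on_subset[OF summable_on_comparison_test[OF M]]) (auto intro: bound)
  have "((\<lambda>X. sum M X) \<longlongrightarrow> infsum M I) (finite_subsets_at_top I)"
    using M has_sum_def has_sum_infsum by blast
  then have "\<forall>\<^sub>F X in finite_subsets_at_top I. dist (sum M X) (infsum M I) < e"
    using \<open>e > 0\<close> tendstoD by blast
  moreover have "\<forall>\<^sub>F X in finite_subsets_at_top I. finite X \<and> X \<subseteq> I"
    by auto
  ultimately show "\<forall>\<^sub>F X in finite_subsets_at_top I.
      \<forall>v\<in>S. dist (\<Sum>p\<in>X. g p v) (\<Sum>\<^sub>\<infinity>p\<in>I. g p v) < e"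
  proof eventually_elim
    case (elim X)
    show ?case
    proof
      fix v assume v: "v \<in> S"
      have "dist (\<Sum>p\<in>X. g p v) (\<Sum>\<^sub>\<infinity>p\<in>I. g p v) = norm (\<Sum>\<^sub>\<infinity>p\<in>I - X. g p v)"
        using infsum_split_finite[of "\<lambda>p. g p v" I X] elim v norm_summable[OF v]
        by (simp add: dist_norm abs_summable_summable)
      also have "\<dots> \<le> (\<Sum>\<^sub>\<infinity>p\<in>I - X. norm (g p v))"
        using v norm_summable by (intro norm_infsum_bound) auto
      also have "\<dots> \<le> (\<Sum>\<^sub>\<infinity>p\<in>I - X. M p)"
        using v norm_summable bound summable_on_subset[OF M Diff_subset] by (intro infsum_mono) auto
      also have "\<dots> = infsum M I - sum M X"
        using infsum_split_finite[OF M, of X] elim by simp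
      also have "\<dots> < e"
        using elim by (simp add: dist_norm abs_less_iff)
      finally show "dist (\<Sum>p\<in>X. g p v) (\<Sum>\<^sub>\<infinity>p\<in>I. g p v) < e" .
    qed
  qed
qed

lemma has_field_derivative_infsum:
  fixes g g' :: "'i \<Rightarrow> complex \<Rightarrow> complex"
  assumes M: "M summable_on I" and "r > 0"
    and bound: "\<And>p v. p \<in> I \<Longrightarrow> v \<in> cball z r \<Longrightarrow> norm (g p v) \<le> M p"
    and deriv: "\<And>p v. p \<in> I \<Longrightarrow> v \<in> cball z r \<Longrightarrow> (g p has_field_derivative g' p v) (at v)"
    and w: "w \<in> ball z r"
  shows "(\<lambda>p. g' p w) summable_on I"
    "((\<lambda>v. \<Sum>\<^sub>\<infinity>p\<in>I. g p v) has_field_derivative (\<Sum>\<^sub>\<infinity>p\<in>I. g' p w)) (at w)"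
proof -
  have finite_sums: "\<forall>\<^sub>F X in finite_subsets_at_top I. continuous_on (cball z r) (\<lambda>v. \<Sum>p\<in>X. g p v) \<and>
      (\<forall>w\<in>ball z r. ((\<lambda>v. \<Sum>p\<in>X. g p v) has_field_derivative (\<Sum>p\<in>X. g' p w)) (at w))"
  proof (rule eventually_finite_subsets_at_top_weakI, intro conjI ballI)
    fix X assume X: "finite X" "X \<subseteq> I"
    show "continuous_on (cball z r) (\<lambda>v. \<Sum>p\<in>X. g p v)"
      using deriv X by (intro continuous_on_sum continuous_at_imp_continuous_on ballI DERIV_isCont) blast
    show "((\<lambda>v. \<Sum>p\<in>X. g p v) has_field_derivative (\<Sum>p\<in>X. g' p w)) (at w)" if "w \<in> ball z r" for w
      using deriv X that by (intro DERIV_sum) auto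
  qed
  obtain G where G: "((\<lambda>v. \<Sum>\<^sub>\<infinity>p\<in>I. g p v) has_field_derivative G) (at w)"
    "((\<lambda>X. \<Sum>p\<in>X. g' p w) \<longlongrightarrow> G) (finite_subsets_at_top I)"
    using has_complex_derivative_uniform_limit[OF finite_sums uniform_limit_infsum[OF M bound] _ \<open>r > 0\<close>] w
    by auto
  then have "((\<lambda>p. g' p w) has_sum G) I"
    by (simp add: has_sum_def)
  then show "(\<lambda>p. g' p w) summable_on I" "((\<lambda>v. \<Sum>\<^sub>\<infinity>p\<in>I. g p v) has_field_derivative (\<Sum>\<^sub>\<infinity>p\<in>I. g' p w)) (at w)"
    using G(1) by (auto simp: has_sum_imp_summable infsumI)
qed

lemma has_field_derivative_infsum_cofinite:
  fixes h h' :: "'i \<Rightarrow> complex \<Rightarrow> complex"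
  assumes "finite F" "F \<subseteq> I" "r > 0"
    and M: "M summable_on (I - F)"
    and bound: "\<And>p v. p \<in> I - F \<Longrightarrow> v \<in> cball w r \<Longrightarrow> norm (h p v) \<le> M p"
    and deriv: "\<And>p v. p \<in> I \<Longrightarrow> v \<in> cball w r \<Longrightarrow> (h p has_field_derivative h' p v) (at v)"
  shows "(\<lambda>p. h p w) summable_on I" "(\<lambda>p. h' p w) summable_on I"
    "((\<lambda>v. \<Sum>\<^sub>\<infinity>p\<in>I. h p v) has_field_derivative (\<Sum>\<^sub>\<infinity>p\<in>I. h' p w)) (at w)"
proof -
  define J where "J = I - F"
  have "I = F \<union> J" "F \<inter> J = {}"
    using assms(2) by (auto simp: J_def)
  have sJ: "(\<lambda>p. h p v) summable_on J" if "v \<in> cball w r" for v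
  proof (rule abs_summable_summable, rule summable_on_comparison_test[OF M[folded J_def]])
    show "norm (h p v) \<le> M p" if "p \<in> J" for p
      using bound that \<open>v \<in> cball w r\<close> by (simp add: J_def)
  qed simp
  have sI: "(\<lambda>p. h p v) summable_on I" if "v \<in> cball w r" for v
    using summable_on_Un_disjoint[OF summable_on_finite[OF \<open>finite F\<close>] sJ[OF that] \<open>F \<inter> J = {}\<close>]
      \<open>I = F \<union> J\<close> by simp
  then show "(\<lambda>p. h p w) summable_on I"
    using \<open>r > 0\<close> by simp
  have dJ: "(\<lambda>p. h' p w) summable_on J"
      "((\<lambda>v. \<Sum>\<^sub>\<infinity>p\<in>J. h p v) has_field_derivative (\<Sum>\<^sub>\<infinity>p\<in>J. h' p w)) (at w)"
    using has_field_derivative_infsum[OF M \<open>r > 0\<close> bound, where g' = h' and w = w] deriv \<open>r > 0\<close>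
    by (simp_all add: J_def)
  show s'I: "(\<lambda>p. h' p w) summable_on I"
    using summable_on_Un_disjoint[OF summable_on_finite[OF \<open>finite F\<close>] dJ(1) \<open>F \<inter> J = {}\<close>]
      \<open>I = F \<union> J\<close> by simp
  have "((\<lambda>v. (\<Sum>p\<in>F. h p v) + (\<Sum>\<^sub>\<infinity>p\<in>J. h p v)) has_field_derivative
          (\<Sum>p\<in>F. h' p w) + (\<Sum>\<^sub>\<infinity>p\<in>J. h' p w)) (at w)"
    using deriv assms(2,3) by (intro DERIV_add DERIV_sum dJ(2)) auto
  moreover have "(\<Sum>p\<in>F. h' p w) + (\<Sum>\<^sub>\<infinity>p\<in>J. h' p w) = (\<Sum>\<^sub>\<infinity>p\<in>I. h' p w)"
    using infsum_split_finite[OF s'I assms(1,2)] by (simp add: J_def)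
  ultimately have "((\<lambda>v. (\<Sum>p\<in>F. h p v) + (\<Sum>\<^sub>\<infinity>p\<in>J. h p v)) has_field_derivative
      (\<Sum>\<^sub>\<infinity>p\<in>I. h' p w)) (at w)"
    by simp
  then show "((\<lambda>v. \<Sum>\<^sub>\<infinity>p\<in>I. h p v) has_field_derivative (\<Sum>\<^sub>\<infinity>p\<in>I. h' p w)) (at w)"
  proof (rule has_field_derivative_transform_within_open[OF _ open_ball])
    show "w \<in> ball w r"
      using \<open>r > 0\<close> by simp
    show "(\<Sum>p\<in>F. h p v) + (\<Sum>\<^sub>\<infinity>p\<in>J. h p v) = (\<Sum>\<^sub>\<infinity>p\<in>I. h p v)" if "v \<in> ball w r" for v
      using infsum_split_finite[OF sI assms(1,2)] that by (simp add: J_def)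
  qed
qed

lemma has_field_derivative_latt_sum:
  fixes h h' :: "int \<times> int \<Rightarrow> complex \<Rightarrow> complex"
  assumes "Im \<tau> > 0" and "open U" and "w \<in> U"
    and deriv: "\<And>p v. p \<in> I \<Longrightarrow> v \<in> U \<Longrightarrow> (h p has_field_derivative h' p v) (at v)"
    and decay: "\<And>R. \<exists>K T. \<forall>p\<in>I. \<forall>v. norm v \<le> R \<longrightarrow> T \<le> norm (latt \<tau> p) \<longrightarrow>
                   norm (h p v) \<le> K / norm (latt \<tau> p) ^ 3"
  shows "(\<lambda>p. h p w) summable_on I" "(\<lambda>p. h' p w) summable_on I"
    "((\<lambda>v. \<Sum>\<^sub>\<infinity>p\<in>I. h p v) has_field_derivative (\<Sum>\<^sub>\<infinity>p\<in>I. h' p w)) (at w)"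
proof -
  obtain r0 where r0: "r0 > 0" "cball w r0 \<subseteq> U"
    using assms open_contains_cball by blast
  define r where "r = min r0 1"
  have r: "r > 0" "cball w r \<subseteq> U" "r \<le> 1"
    using r0 by (auto simp: r_def)
  obtain K T where KT: "\<And>p v. p \<in> I \<Longrightarrow> norm v \<le> norm w + 1 \<Longrightarrow> T \<le> norm (latt \<tau> p) \<Longrightarrow>
      norm (h p v) \<le> K / norm (latt \<tau> p) ^ 3"
    using decay[of "norm w + 1"] by blast
  define F where "F = {p \<in> I. norm (latt \<tau> p) < max T 1}"
  have "finite F"
    by (rule finite_subset[OF _ finite_latt_bounded[OF \<open>Im \<tau> > 0\<close>, of "max T 1"]]) (auto simp: F_def)
  have "I - F \<subseteq> UNIV - {(0, 0)}"
    by (force simp: F_def)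
  then have M: "(\<lambda>p. K * (1 / norm (latt \<tau> p) ^ 3)) summable_on (I - F)"
    by (intro summable_on_cmult_right summable_on_subset[OF latt_inverse_cube_summable[OF \<open>Im \<tau> > 0\<close>]])
  have bound: "norm (h p v) \<le> K * (1 / norm (latt \<tau> p) ^ 3)" if "p \<in> I - F" "v \<in> cball w r" for p v
  proof -
    have "norm v \<le> norm w + 1"
      using that(2) r(3) norm_triangle_ineq2[of v w] by (auto simp: dist_norm norm_minus_commute)
    with that(1) show ?thesis
      using KT[of p v] by (auto simp: F_def)
  qed
  have derivI: "(h p has_field_derivative h' p v) (at v)" if "p \<in> I" "v \<in> cball w r" for p v
    using that r(2) by (intro deriv) auto
  have "F \<subseteq> I"
    by (auto simp: F_def)
  show "(\<lambda>p. h p w) summable_on I" "(\<lambda>p. h' p w) summable_on I"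
    "((\<lambda>v. \<Sum>\<^sub>\<infinity>p\<in>I. h p v) has_field_derivative (\<Sum>\<^sub>\<infinity>p\<in>I. h' p w)) (at w)"
    using has_field_derivative_infsum_cofinite[where w = w, OF \<open>finite F\<close> \<open>F \<subseteq> I\<close> r(1) M bound derivI]
    by simp_all
qed

lemma has_field_derivative_divide_power:
  fixes a c v :: complex
  assumes "v \<noteq> a"
  shows "((\<lambda>v. c / (v - a)^k) has_field_derivative (- of_nat k * c / (v - a)^(Suc k))) (at v)"
proof -
  have "((\<lambda>v. c * inverse ((v - a)^k)) has_field_derivative
         c * (- (inverse ((v - a)^k) * (of_nat k * (v - a)^(k - 1) * 1) * inverse ((v - a)^k)))) (at v)"
    using assms by (intro DERIV_cmult DERIV_inverse_fun DERIV_power derivative_eq_intros) auto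
  moreover have "c * (- (inverse ((v - a)^k) * (of_nat k * (v - a)^(k - 1) * 1) * inverse ((v - a)^k)))
      = - of_nat k * c / (v - a)^(Suc k)"
  proof (cases k)
    case (Suc j)
    define x where "x = v - a"
    have "x \<noteq> 0"
      using assms by (simp add: x_def)
    then show ?thesis
      by (simp add: Suc field_simps power_Suc flip: x_def)
  qed simp
  moreover have "(\<lambda>v. c / (v - a)^k) = (\<lambda>v. c * inverse ((v - a)^k))"
    by (simp add: divide_inverse)
  ultimately show ?thesis
    by (simp only:)
qed

lemma holomorphic_second_order_limit:
  assumes "f holomorphic_on ball z r" "r > 0"
  shows "((\<lambda>w. (f w - f z - deriv f z * (w - z)) / (w - z)^2) \<longlongrightarrow> deriv (deriv f) z / 2) (at z)"
proof -
  define c where "c n = (deriv ^^ n) f z / fact n" for n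
  have "(\<lambda>n. c (n + 2) * x ^ n) sums ((f (z + x) - f z - deriv f z * x) / x^2)"
    if "x \<noteq> 0" "norm x < r" for x
  proof -
    have "(\<lambda>n. c n * x ^ n) sums f (z + x)"
      using holomorphic_power_series[OF assms(1), of "z + x"] that by (simp add: c_def dist_norm)
    from sums_divide[OF sums_split_initial_segment[OF this, of 2], of "x^2"]
    show ?thesis
      using that by (simp add: c_def power_add eval_nat_numeral diff_diff_add)
  qed
  from powser_limit_0_strong[OF assms(2) this]
  have "((\<lambda>x. (f (z + x) - f z - deriv f z * x) / x^2) \<longlongrightarrow> c (Suc (Suc 0))) (at 0)"
    by simp
  moreover have "(deriv ^^ Suc (Suc 0)) f = deriv (deriv f)"
    by (simp only: funpow.simps o_apply id_apply)
  moreover have "fact (Suc (Suc 0)) = (2::complex)"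
    by (simp add: fact_numeral)
  ultimately have lim: "((\<lambda>x. (f (z + x) - f z - deriv f z * x) / x^2) \<longlongrightarrow> deriv (deriv f) z / 2) (at 0)"
    by (simp add: c_def)
  show ?thesis
    by (rule LIM_offset_zero_cancel) (use lim in simp)
qed

lemma isCont_deriv_holomorphic:
  assumes "f holomorphic_on S" "open S" "z \<in> S"
  shows "isCont (deriv f) z"
  using holomorphic_on_imp_continuous_on[OF holomorphic_deriv[OF assms(1,2)]] assms(2,3)
  by (simp add: continuous_on_eq_continuous_at)

lemma tendsto_shift_periodic:
  fixes f :: "'a::real_normed_vector \<Rightarrow> 'b::topological_space"
  assumes "(f \<longlongrightarrow> l) (at c)" "\<forall>\<^sub>F x in at (c + d). f (x - d) = f x"
  shows "(f \<longlongrightarrow> l) (at (c + d))"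
proof -
  have "((\<lambda>x. f (x - d)) \<longlongrightarrow> l) (at (c + d))"
    using LIM_offset[OF assms(1), of "- d"] by simp
  then show ?thesis
    by (rule Lim_transform_eventually) (use assms(2) in simp)
qed

lemma holomorphic_extension_by_limits:
  fixes f :: "complex \<Rightarrow> complex"
  assumes hol: "f holomorphic_on - P"
    and discrete: "\<And>c. \<forall>\<^sub>F x in at c. x \<notin> P"
    and lim: "\<And>c. c \<in> P \<Longrightarrow> \<exists>l. (f \<longlongrightarrow> l) (at c)"
  obtains g where "g holomorphic_on UNIV" "\<And>c. (f \<longlongrightarrow> g c) (at c)" "\<And>c. c \<notin> P \<Longrightarrow> g c = f c"
proof
  have punctured_ball: "\<exists>d>0. ball c d - {c} \<subseteq> - P" for c
    using discrete[of c] by (auto simp: eventually_at dist_commute)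
  have "open (- P)"
    unfolding open_contains_ball
    using punctured_ball by (metis Compl_iff insert_Diff insert_subset centre_in_ball)
  then have cont_f: "isCont f c" if "c \<notin> P" for c
    using that hol holomorphic_on_imp_continuous_on continuous_on_eq_continuous_at by blast
  define g where "g c = Lim (at c) f" for c
  show lim_g: "(f \<longlongrightarrow> g c) (at c)" for c
  proof -
    obtain l where l: "(f \<longlongrightarrow> l) (at c)"
      using lim cont_f isCont_def by blast
    then have "Lim (at c) f = l"
      by (intro tendsto_Lim) auto
    with l show ?thesis
      by (simp add: g_def)
  qed
  show g_eq: "g c = f c" if "c \<notin> P" for c
    using cont_f[OF that] tendsto_unique[OF trivial_limit_at lim_g] by (metis isCont_def)
  have "isCont g c" for c
    unfolding isCont_def
    by (rule Lim_transform_eventually[OF lim_g]) (use discrete[of c] g_eq in \<open>auto elim: eventually_mono\<close>)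
  then have cont: "continuous_on S g" for S
    by (simp add: continuous_at_imp_continuous_on)
  have "g field_differentiable at c" for c
  proof -
    obtain d where "d > 0" and d: "ball c d - {c} \<subseteq> - P"
      using punctured_ball by blast
    have "g holomorphic_on ball c d - {c}"
      by (rule holomorphic_transform[OF holomorphic_on_subset[OF hol d]]) (use g_eq d in auto)
    then have "g holomorphic_on ball c d"
      by (rule no_isolated_singularity[OF cont _ open_ball]) simp
    then show ?thesis
      using \<open>d > 0\<close> holomorphic_on_imp_differentiable_at by auto
  qed
  then show "g holomorphic_on UNIV"
    by (simp add: holomorphic_on_def field_differentiable_at_within)
qed

lemma entire_lattice_periodic_constant:
  assumes "Im \<tau> > 0" "g holomorphic_on UNIV" "\<And>c q. g (c + latt \<tau> q) = g c"
  shows "g c = g 0"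
proof -
  define K where "K = (\<lambda>p. of_real (fst p) + of_real (snd p) * \<tau>) ` ({0..1::real} \<times> {0..1::real})"
  have "compact K"
    unfolding K_def by (intro compact_continuous_image compact_Times compact_Icc continuous_intros)
  then have "bounded (g ` K)"
    using assms(2) holomorphic_on_imp_continuous_on
    by (intro compact_imp_bounded compact_continuous_image) (auto intro: continuous_on_subset)
  moreover have "range g \<subseteq> g ` K"
  proof
    fix y assume "y \<in> range g"
    then obtain a where y: "y = g a" by auto
    define t where "t = Im a / Im \<tau>"
    define s where "s = Re a - t * Re \<tau>"
    have "a - latt \<tau> (\<lfloor>s\<rfloor>, \<lfloor>t\<rfloor>) = of_real (s - \<lfloor>s\<rfloor>) + of_real (t - \<lfloor>t\<rfloor>) * \<tau>"
      using assms(1) by (intro complex_eqI) (simp_all add: latt_def s_def t_def field_simps)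
    moreover have "s - \<lfloor>s\<rfloor> \<in> {0..1}" "t - \<lfloor>t\<rfloor> \<in> {0..1}"
      by (auto simp: frac_lt_1 less_imp_le) linarith+
    ultimately have "a - latt \<tau> (\<lfloor>s\<rfloor>, \<lfloor>t\<rfloor>) \<in> K"
      unfolding K_def by (intro image_eqI[where x = "(s - \<lfloor>s\<rfloor>, t - \<lfloor>t\<rfloor>)"]) auto
    moreover have "g a = g (a - latt \<tau> (\<lfloor>s\<rfloor>, \<lfloor>t\<rfloor>))"
      using assms(3)[of "a - latt \<tau> (\<lfloor>s\<rfloor>, \<lfloor>t\<rfloor>)" "(\<lfloor>s\<rfloor>, \<lfloor>t\<rfloor>)"] by simp
    ultimately show "y \<in> g ` K"
      using y by auto
  qed
  ultimately have "g constant_on UNIV"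
    by (intro Liouville_theorem[OF assms(2)]) (rule bounded_subset)
  then show ?thesis
    by (auto simp: constant_on_def)
qed

section \<open>The Weierstrass functions\<close>

definition wpW_reg :: "complex \<Rightarrow> complex \<Rightarrow> complex" where
  "wpW_reg \<tau> z = (\<Sum>\<^sub>\<infinity>p\<in>UNIV - {(0, 0)}. 1 / (z - latt \<tau> p)^2 - 1 / (latt \<tau> p)^2)"

definition zetaW_reg :: "complex \<Rightarrow> complex \<Rightarrow> complex" where
  "zetaW_reg \<tau> z = (\<Sum>\<^sub>\<infinity>p\<in>UNIV - {(0, 0)}. 1 / (z - latt \<tau> p) + 1 / latt \<tau> p + z / (latt \<tau> p)^2)"

definition wpW' :: "complex \<Rightarrow> complex \<Rightarrow> complex" where
  "wpW' \<tau> z = (\<Sum>\<^sub>\<infinity>p\<in>UNIV. -2 / (z - latt \<tau> p)^3)"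

lemma wpW_eq: "wpW \<tau> z = 1 / z^2 + wpW_reg \<tau> z"
  by (simp add: wpW_def wpW_reg_def)

lemma zetaW_eq: "zetaW \<tau> z = 1 / z + zetaW_reg \<tau> z"
  by (simp add: zetaW_def zetaW_reg_def)

lemma norm_diff_ge_half_norm:
  fixes v w :: complex
  assumes "norm v \<le> R" "2 * R \<le> norm w"
  shows "norm w / 2 \<le> norm (v - w)"
  using assms norm_triangle_ineq2[of w v] by (simp add: norm_minus_commute)

lemma norm_divide_le_divide:
  fixes a b :: complex
  assumes "norm a \<le> A" "B > 0" "B \<le> norm b"
  shows "norm (a / b) \<le> A / B"
  using assms order_trans[OF norm_ge_zero assms(1)] by (simp add: norm_divide frac_le)

lemma norm_wp_term_le:
  fixes v w :: complex
  assumes "norm v \<le> R" "2 * R + 1 \<le> norm w"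
  shows "norm (1 / (v - w)^2 - 1 / w^2) \<le> 12 * R / norm w ^ 3"
proof -
  have "R \<ge> 0" "norm w > 0"
    using assms order_trans[OF norm_ge_zero assms(1)] by auto
  have far: "norm w / 2 \<le> norm (v - w)"
    using assms by (intro norm_diff_ge_half_norm[of v R]) auto
  then have "v - w \<noteq> 0"
    using \<open>norm w > 0\<close> by auto
  then have "1 / (v - w)^2 - 1 / w^2 = v * (2 * w - v) / (w^2 * (v - w)^2)"
    using \<open>norm w > 0\<close> by (simp add: divide_simps) (simp add: algebra_simps power2_eq_square)
  also have "norm \<dots> \<le> R * (3 * norm w) / (norm w ^ 2 * (norm w / 2) ^ 2)"
  proof (rule norm_divide_le_divide)
    have "norm (2 * w - v) \<le> 3 * norm w"
      using norm_triangle_ineq4[of "2 * w" v] assms \<open>R \<ge> 0\<close> by (simp add: norm_mult)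
    then show "norm (v * (2 * w - v)) \<le> R * (3 * norm w)"
      using assms(1) by (simp add: norm_mult mult_mono')
    show "norm w ^ 2 * (norm w / 2) ^ 2 \<le> norm (w^2 * (v - w)^2)"
      using far \<open>norm w > 0\<close> by (simp add: norm_mult norm_power power_mono)
  qed (use \<open>norm w > 0\<close> in simp)
  also have "\<dots> = 12 * R / norm w ^ 3"
    using \<open>norm w > 0\<close> by (simp add: field_simps power2_eq_square power3_eq_cube)
  finally show ?thesis .
qed

lemma norm_zeta_term_le:
  fixes v w :: complex
  assumes "norm v \<le> R" "2 * R + 1 \<le> norm w"
  shows "norm (1 / (v - w) + 1 / w + v / w^2) \<le> 2 * R^2 / norm w ^ 3"
proof -
  have "R \<ge> 0" "norm w > 0"
    using assms order_trans[OF norm_ge_zero assms(1)] by auto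
  have far: "norm w / 2 \<le> norm (v - w)"
    using assms by (intro norm_diff_ge_half_norm[of v R]) auto
  then have "v - w \<noteq> 0"
    using \<open>norm w > 0\<close> by auto
  then have "1 / (v - w) + 1 / w + v / w^2 = v^2 / (w^2 * (v - w))"
    using \<open>norm w > 0\<close> by (simp add: divide_simps) (simp add: algebra_simps power2_eq_square)
  also have "norm \<dots> \<le> R^2 / (norm w ^ 2 * (norm w / 2))"
    using assms(1) far \<open>norm w > 0\<close>
    by (intro norm_divide_le_divide) (auto simp: norm_mult norm_power power_mono)
  also have "\<dots> = 2 * R^2 / norm w ^ 3"
    using \<open>norm w > 0\<close> by (simp add: field_simps power2_eq_square power3_eq_cube)
  finally show ?thesis .
qed

lemma open_lattice_nonzero_compl:
  assumes "Im \<tau> > 0"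
  shows "open (- (lattice \<tau> - {0}))"
proof -
  have "lattice \<tau> - {0} = latt \<tau> ` (UNIV - {(0, 0)})"
    using latt_eq_0_iff[OF assms] by (auto simp: lattice_def)
  then show ?thesis
    using closed_latt_image[OF assms] by (simp add: open_Compl)
qed

lemma latt_neq_if_notin_lattice_nonzero:
  assumes "Im \<tau> > 0" "z \<notin> lattice \<tau> - {0}" "p \<noteq> (0, 0)"
  shows "z \<noteq> latt \<tau> p"
proof
  assume "z = latt \<tau> p"
  then have "z = 0"
    using assms(2) by (auto simp: lattice_def)
  with \<open>z = latt \<tau> p\<close> show False
    using latt_eq_0_iff[OF assms(1)] assms(3) by simp
qed

lemma wpW_reg_has_field_derivative:
  assumes "Im \<tau> > 0" "z \<notin> lattice \<tau> - {0}"
  shows "(\<lambda>p. -2 / (z - latt \<tau> p)^3) summable_on (UNIV - {(0, 0)})"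
    and "(wpW_reg \<tau> has_field_derivative (\<Sum>\<^sub>\<infinity>p\<in>UNIV - {(0, 0)}. -2 / (z - latt \<tau> p)^3)) (at z)"
proof -
  define h where "h p v = 1 / (v - latt \<tau> p)^2 - 1 / (latt \<tau> p)^2" for p v
  define h' where "h' p v = -2 / (v - latt \<tau> p)^3" for p v
  have deriv: "(h p has_field_derivative h' p v) (at v)"
    if "p \<in> UNIV - {(0, 0)}" "v \<in> - (lattice \<tau> - {0})" for p v
  proof -
    have "v \<noteq> latt \<tau> p"
      using that latt_neq_if_notin_lattice_nonzero[OF assms(1), of v p] by blast
    then show ?thesis
      unfolding h_def[abs_def] h'_def
      using DERIV_diff[OF has_field_derivative_divide_power[of v "latt \<tau> p" 1 2]
          DERIV_const[of "1 / (latt \<tau> p)^2"]]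
      by (simp add: eval_nat_numeral)
  qed
  have decay: "\<exists>K T. \<forall>p\<in>UNIV - {(0, 0)}. \<forall>v. norm v \<le> R \<longrightarrow> T \<le> norm (latt \<tau> p) \<longrightarrow>
      norm (h p v) \<le> K / norm (latt \<tau> p) ^ 3" for R
    by (intro exI[of _ "12 * R"] exI[of _ "2 * R + 1"]) (auto simp: h_def intro: norm_wp_term_le)
  have "z \<in> - (lattice \<tau> - {0})"
    using assms(2) by blast
  note sum = has_field_derivative_latt_sum(2,3)[OF assms(1) open_lattice_nonzero_compl[OF assms(1)] this deriv decay]
  from sum show "(\<lambda>p. -2 / (z - latt \<tau> p)^3) summable_on (UNIV - {(0, 0)})"
    "(wpW_reg \<tau> has_field_derivative (\<Sum>\<^sub>\<infinity>p\<in>UNIV - {(0, 0)}. -2 / (z - latt \<tau> p)^3)) (at z)"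
    by (simp_all add: h_def h'_def wpW_reg_def[abs_def])
qed

lemma zetaW_reg_has_field_derivative:
  assumes "Im \<tau> > 0" "z \<notin> lattice \<tau> - {0}"
  shows "(zetaW_reg \<tau> has_field_derivative - wpW_reg \<tau> z) (at z)"
proof -
  define h where "h p v = 1 / (v - latt \<tau> p) + 1 / latt \<tau> p + v / (latt \<tau> p)^2" for p v
  define h' where "h' p v = - (1 / (v - latt \<tau> p)^2 - 1 / (latt \<tau> p)^2)" for p v
  have deriv: "(h p has_field_derivative h' p v) (at v)"
    if "p \<in> UNIV - {(0, 0)}" "v \<in> - (lattice \<tau> - {0})" for p v
  proof -
    have "v \<noteq> latt \<tau> p"
      using that latt_neq_if_notin_lattice_nonzero[OF assms(1), of v p] by blast
    then show ?thesis
      unfolding h_def[abs_def] h'_def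
      using DERIV_add[OF DERIV_add[OF has_field_derivative_divide_power[of v "latt \<tau> p" 1 1]
            DERIV_const[of "1 / latt \<tau> p"]] DERIV_cdivide[OF DERIV_ident, of "(latt \<tau> p)^2"]]
      by (simp add: power2_eq_square)
  qed
  have decay: "\<exists>K T. \<forall>p\<in>UNIV - {(0, 0)}. \<forall>v. norm v \<le> R \<longrightarrow> T \<le> norm (latt \<tau> p) \<longrightarrow>
      norm (h p v) \<le> K / norm (latt \<tau> p) ^ 3" for R
    by (intro exI[of _ "2 * R^2"] exI[of _ "2 * R + 1"]) (auto simp: h_def intro: norm_zeta_term_le)
  have "z \<in> - (lattice \<tau> - {0})"
    using assms(2) by blast
  from has_field_derivative_latt_sum(3)[OF assms(1) open_lattice_nonzero_compl[OF assms(1)] this deriv decay]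
  show ?thesis
    by (simp only: h_def h'_def zetaW_reg_def[abs_def] wpW_reg_def infsum_uminus)
qed

lemma wpW_has_field_derivative:
  assumes "Im \<tau> > 0" "z \<notin> lattice \<tau>"
  shows "(wpW \<tau> has_field_derivative wpW' \<tau> z) (at z)"
proof -
  have "z \<noteq> 0" "z \<notin> lattice \<tau> - {0}"
    using assms(2) by auto
  note reg = wpW_reg_has_field_derivative[OF assms(1) this(2)]
  have "((\<lambda>z. 1 / z^2 + wpW_reg \<tau> z) has_field_derivative
      -2 / z^3 + (\<Sum>\<^sub>\<infinity>p\<in>UNIV - {(0, 0)}. -2 / (z - latt \<tau> p)^3)) (at z)"
    using DERIV_add[OF has_field_derivative_divide_power[of z 0 1 2] reg(2)] \<open>z \<noteq> 0\<close>
    by (simp add: eval_nat_numeral)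
  moreover have "-2 / z^3 + (\<Sum>\<^sub>\<infinity>p\<in>UNIV - {(0, 0)}. -2 / (z - latt \<tau> p)^3) = wpW' \<tau> z"
  proof -
    have "UNIV = insert (0, 0) (UNIV - {(0::int, 0::int)})"
      by auto
    then have "wpW' \<tau> z = (\<Sum>\<^sub>\<infinity>p\<in>insert (0, 0) (UNIV - {(0, 0)}). -2 / (z - latt \<tau> p)^3)"
      unfolding wpW'_def by simp
    also have "\<dots> = -2 / z^3 + (\<Sum>\<^sub>\<infinity>p\<in>UNIV - {(0, 0)}. -2 / (z - latt \<tau> p)^3)"
      using reg(1) by (subst infsum_insert) auto
    finally show ?thesis ..
  qed
  ultimately show ?thesis
    by (simp add: wpW_eq[abs_def])
qed

lemma zetaW_has_field_derivative:
  assumes "Im \<tau> > 0" "z \<notin> lattice \<tau>"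
  shows "(zetaW \<tau> has_field_derivative - wpW \<tau> z) (at z)"
proof -
  have "z \<noteq> 0" "z \<notin> lattice \<tau> - {0}"
    using assms(2) by auto
  then have "((\<lambda>z. 1 / z + zetaW_reg \<tau> z) has_field_derivative -1 / z^2 + - wpW_reg \<tau> z) (at z)"
    using DERIV_add[OF has_field_derivative_divide_power[of z 0 1 1]
        zetaW_reg_has_field_derivative[OF assms(1)]]
    by (simp add: eval_nat_numeral)
  then show ?thesis
    by (simp add: zetaW_eq[abs_def] wpW_eq)
qed

lemma wpW_holomorphic: "Im \<tau> > 0 \<Longrightarrow> wpW \<tau> holomorphic_on - lattice \<tau>"
  using wpW_has_field_derivative open_lattice_compl by (auto simp: holomorphic_on_open)

lemma zetaW_holomorphic: "Im \<tau> > 0 \<Longrightarrow> zetaW \<tau> holomorphic_on - lattice \<tau>"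
  using zetaW_has_field_derivative open_lattice_compl by (auto simp: holomorphic_on_open)

lemma wpW_reg_holomorphic: "Im \<tau> > 0 \<Longrightarrow> wpW_reg \<tau> holomorphic_on - (lattice \<tau> - {0})"
  using wpW_reg_has_field_derivative(2) open_lattice_nonzero_compl
  by (auto simp: holomorphic_on_open)

lemma zetaW_reg_holomorphic: "Im \<tau> > 0 \<Longrightarrow> zetaW_reg \<tau> holomorphic_on - (lattice \<tau> - {0})"
  using zetaW_reg_has_field_derivative open_lattice_nonzero_compl
  by (auto simp: holomorphic_on_open)

lemma deriv_wpW: "Im \<tau> > 0 \<Longrightarrow> z \<notin> lattice \<tau> \<Longrightarrow> deriv (wpW \<tau>) z = wpW' \<tau> z"
  by (rule DERIV_imp_deriv) (rule wpW_has_field_derivative)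

lemma deriv_zetaW: "Im \<tau> > 0 \<Longrightarrow> z \<notin> lattice \<tau> \<Longrightarrow> deriv (zetaW \<tau>) z = - wpW \<tau> z"
  by (rule DERIV_imp_deriv) (rule zetaW_has_field_derivative)

lemma deriv_zetaW_reg: "Im \<tau> > 0 \<Longrightarrow> z \<notin> lattice \<tau> - {0} \<Longrightarrow> deriv (zetaW_reg \<tau>) z = - wpW_reg \<tau> z"
  by (rule DERIV_imp_deriv) (rule zetaW_reg_has_field_derivative)

lemma deriv_wpW_eq:
  assumes "Im \<tau> > 0" "z \<notin> lattice \<tau>"
  shows "deriv (wpW \<tau>) z = -2 / z^3 + deriv (wpW_reg \<tau>) z"
proof -
  have "z \<noteq> 0" "z \<notin> lattice \<tau> - {0}"
    using assms(2) by auto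
  note reg = wpW_reg_has_field_derivative(2)[OF assms(1) this(2)]
  have "(wpW_reg \<tau> has_field_derivative deriv (wpW_reg \<tau>) z) (at z)"
    using reg DERIV_imp_deriv[OF reg] by simp
  from DERIV_add[OF has_field_derivative_divide_power[of z 0 1 2] this] \<open>z \<noteq> 0\<close>
  show ?thesis
    unfolding wpW_eq[abs_def] by (intro DERIV_imp_deriv) (simp add: eval_nat_numeral)
qed

lemma wpW_reg_even: "wpW_reg \<tau> (- z) = wpW_reg \<tau> z"
  unfolding wpW_reg_def
  by (subst infsum_reindex_uminus[OF uminus_image_nonzero_pairs, symmetric])
    (simp add: power2_eq_square algebra_simps)

lemma zetaW_reg_odd: "zetaW_reg \<tau> (- z) = - zetaW_reg \<tau> z"
proof -
  have term_odd: "1 / (- z - - w) + 1 / (- w) + - z / (- w)^2 = - (1 / (z - w) + 1 / w + z / w^2)"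
    for w :: complex
  proof -
    have "- z - - w = - (z - w)"
      by simp
    moreover have "1 / (- (z - w)) = - (1 / (z - w))" "1 / (- w) = - (1 / w)"
      by (rule divide_minus_right)+
    moreover have "- z / (- w)^2 = - (z / w^2)"
      by simp
    ultimately show ?thesis
      by simp
  qed
  show ?thesis
    unfolding zetaW_reg_def
    by (subst infsum_reindex_uminus[OF uminus_image_nonzero_pairs, symmetric])
      (simp only: latt_uminus term_odd infsum_uminus)
qed

lemma wpW_even: "wpW \<tau> (- z) = wpW \<tau> z"
  by (simp add: wpW_eq wpW_reg_even)

lemma zetaW_odd: "zetaW \<tau> (- z) = - zetaW \<tau> z"
  by (simp add: zetaW_eq zetaW_reg_odd)

lemma zetaW_reg_0 [simp]: "zetaW_reg \<tau> 0 = 0"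
  using zetaW_reg_odd[of \<tau> 0] by simp

lemma wpW_reg_0 [simp]: "wpW_reg \<tau> 0 = 0"
  by (simp add: wpW_reg_def)

lemma deriv_wpW_reg_0:
  assumes "Im \<tau> > 0"
  shows "deriv (wpW_reg \<tau>) 0 = 0"
proof -
  have "deriv (wpW_reg \<tau>) 0 = (\<Sum>\<^sub>\<infinity>p\<in>UNIV - {(0, 0)}. -2 / (0 - latt \<tau> p)^3)"
    by (rule DERIV_imp_deriv, rule wpW_reg_has_field_derivative[OF assms]) simp
  also have "\<dots> = 0"
    by (rule infsum_odd_eq_0[OF uminus_image_nonzero_pairs]) (simp add: power3_eq_cube)
  finally show ?thesis .
qed

lemma wpW'_periodic: "wpW' \<tau> (z + latt \<tau> q) = wpW' \<tau> z"
proof -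
  have "bij_betw (\<lambda>p. p + q) UNIV UNIV"
    by (rule bij_betwI[of _ _ _ "\<lambda>p. p - q"]) auto
  from infsum_reindex_bij_betw[OF this, of "\<lambda>p. -2 / (z + latt \<tau> q - latt \<tau> p)^3"]
  show ?thesis
    by (simp add: wpW'_def algebra_simps)
qed

lemma periodic_int_multiple:
  fixes f :: "'a::ring_1 \<Rightarrow> 'b"
  assumes invariant: "\<And>z. z + d \<in> S \<longleftrightarrow> z \<in> S"
    and periodic: "\<And>z. z \<notin> S \<Longrightarrow> f (z + d) = f z"
    and "z \<notin> S"
  shows "f (z + of_int k * d) = f z"
proof -
  have "z + of_int k * d \<notin> S \<and> f (z + of_int k * d) = f z"
  proof (induction k rule: int_induct[where k = 0])
    case (step1 i)
    have "z + of_int (i + 1) * d = (z + of_int i * d) + d"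
      by (simp add: algebra_simps)
    then show ?case
      using invariant[of "z + of_int i * d"] periodic[of "z + of_int i * d"] step1.IH
      by (simp add: add.assoc)
  next
    case (step2 i)
    have "z + of_int i * d = (z + of_int (i - 1) * d) + d"
      by (simp add: algebra_simps)
    then show ?case
      using invariant[of "z + of_int (i - 1) * d"] periodic[of "z + of_int (i - 1) * d"] step2.IH
      by (auto simp: add.assoc)
  qed (use \<open>z \<notin> S\<close> in simp)
  then show ?thesis ..
qed

lemma lattice_compl_deriv_zero_constant:
  assumes "Im \<tau> > 0" and deriv: "\<And>x. x \<notin> lattice \<tau> \<Longrightarrow> (f has_field_derivative 0) (at x)"
  obtains c where "\<And>x. x \<notin> lattice \<tau> \<Longrightarrow> f x = c"
proof -
  have "\<exists>c. \<forall>x\<in>- lattice \<tau>. f x = c"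
  proof (rule DERIV_zero_connected_constant[OF connected_lattice_compl open_lattice_compl[OF assms(1)], of "{}"])
    show "continuous_on (- lattice \<tau>) f"
      using deriv by (intro continuous_at_imp_continuous_on ballI DERIV_isCont) blast
  qed (use deriv in auto)
  with that show ?thesis
    by blast
qed

lemma wpW_periodic_if_half_notin_lattice:
  assumes "Im \<tau> > 0" "\<omega> \<in> lattice \<tau>" "\<omega> / 2 \<notin> lattice \<tau>" "z \<notin> lattice \<tau>"
  shows "wpW \<tau> (z + \<omega>) = wpW \<tau> z"
proof -
  obtain q where q: "\<omega> = latt \<tau> q"
    using assms(2) by (auto simp: lattice_def)
  have "((\<lambda>z. wpW \<tau> (z + \<omega>) - wpW \<tau> z) has_field_derivative 0) (at x)" if "x \<notin> lattice \<tau>" for x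
  proof -
    have "x \<notin> lattice \<tau>" "x + \<omega> \<notin> lattice \<tau>"
      using that q by auto
    then have "((\<lambda>z. wpW \<tau> (z + \<omega>) - wpW \<tau> z) has_field_derivative wpW' \<tau> (x + \<omega>) - wpW' \<tau> x) (at x)"
      using assms(1) by (intro DERIV_diff DERIV_shift[THEN iffD1] wpW_has_field_derivative) simp_all
    then show ?thesis
      by (simp add: q wpW'_periodic)
  qed
  then obtain c where c: "\<And>x. x \<notin> lattice \<tau> \<Longrightarrow> wpW \<tau> (x + \<omega>) - wpW \<tau> x = c"
    using lattice_compl_deriv_zero_constant[OF assms(1)] by blast
  have "c = wpW \<tau> (\<omega> / 2) - wpW \<tau> (- (\<omega> / 2))"
    using c[of "- \<omega> / 2"] assms(3) by simp
  then show ?thesis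
    using c[OF assms(4)] by (simp add: wpW_even)
qed

lemma wpW_periodic:
  assumes "Im \<tau> > 0" "z \<notin> lattice \<tau>"
  shows "wpW \<tau> (z + latt \<tau> q) = wpW \<tau> z"
proof -
  have generators: "latt \<tau> (1, 0) = 1" "latt \<tau> (0, 1) = \<tau>"
    by (simp_all add: latt_def)
  have shift_1: "z + 1 \<in> lattice \<tau> \<longleftrightarrow> z \<in> lattice \<tau>"
    and shift_\<tau>: "z + \<tau> \<in> lattice \<tau> \<longleftrightarrow> z \<in> lattice \<tau>" for z
    using add_latt_in_lattice_iff[of z \<tau> "(1, 0)"] add_latt_in_lattice_iff[of z \<tau> "(0, 1)"]
    by (simp_all add: generators)
  have "1 \<in> lattice \<tau>" "\<tau> \<in> lattice \<tau>"
    using rangeI[of "latt \<tau>" "(1, 0)"] rangeI[of "latt \<tau>" "(0, 1)"] by (simp_all add: lattice_def generators)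
  then have per_1: "wpW \<tau> (z + 1) = wpW \<tau> z" and per_\<tau>: "wpW \<tau> (z + \<tau>) = wpW \<tau> z"
    if "z \<notin> lattice \<tau>" for z
    using wpW_periodic_if_half_notin_lattice[OF assms(1) _ _ that] half_generators_notin_lattice[OF assms(1)]
    by auto
  have "z + of_int (fst q) * 1 = z + latt \<tau> (fst q, 0)"
    by (simp add: latt_def)
  then have "z + of_int (fst q) * 1 \<notin> lattice \<tau>"
    using assms(2) by simp
  have "wpW \<tau> (z + latt \<tau> q) = wpW \<tau> ((z + of_int (fst q) * 1) + of_int (snd q) * \<tau>)"
    by (simp add: latt_def algebra_simps)
  also have "\<dots> = wpW \<tau> (z + of_int (fst q) * 1)"
    using shift_\<tau> per_\<tau> \<open>z + of_int (fst q) * 1 \<notin> lattice \<tau>\<close>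
    by (intro periodic_int_multiple[where S = "lattice \<tau>"]) auto
  also have "\<dots> = wpW \<tau> z"
    using shift_1 per_1 assms(2) by (intro periodic_int_multiple[where S = "lattice \<tau>"]) auto
  finally show ?thesis .
qed

lemma zetaW_quasi_periodic:
  assumes "Im \<tau> > 0"
  obtains \<eta> where "\<And>z. z \<notin> lattice \<tau> \<Longrightarrow> zetaW \<tau> (z + latt \<tau> q) = zetaW \<tau> z + \<eta>"
proof -
  have "((\<lambda>z. zetaW \<tau> (z + latt \<tau> q) - zetaW \<tau> z) has_field_derivative 0) (at x)"
    if "x \<notin> lattice \<tau>" for x
  proof -
    have "x \<notin> lattice \<tau>" "x + latt \<tau> q \<notin> lattice \<tau>"
      using that by auto
    then have "((\<lambda>z. zetaW \<tau> (z + latt \<tau> q) - zetaW \<tau> z) has_field_derivative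
        - wpW \<tau> (x + latt \<tau> q) - - wpW \<tau> x) (at x)"
      using assms by (intro DERIV_diff DERIV_shift[THEN iffD1] zetaW_has_field_derivative) simp_all
    then show ?thesis
      using wpW_periodic[OF assms \<open>x \<notin> lattice \<tau>\<close>] by simp
  qed
  then obtain c where "\<And>x. x \<notin> lattice \<tau> \<Longrightarrow> zetaW \<tau> (x + latt \<tau> q) - zetaW \<tau> x = c"
    using lattice_compl_deriv_zero_constant[OF assms] by blast
  then show ?thesis
    using that[of c] by (simp add: algebra_simps)
qed

lemma zetaW_second_order_limit:
  assumes "Im \<tau> > 0" "b \<notin> lattice \<tau>"
  shows "((\<lambda>a. (zetaW \<tau> (a + b) - zetaW \<tau> b + wpW \<tau> b * a) / a^2) \<longlongrightarrow> - deriv (wpW \<tau>) b / 2) (at 0)"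
proof -
  obtain r where r: "r > 0" "ball b r \<subseteq> - lattice \<tau>"
    using open_lattice_compl[OF assms(1)] assms(2) open_contains_ball by blast
  have "deriv (deriv (zetaW \<tau>)) b = deriv (\<lambda>w. - wpW \<tau> w) b"
    using open_lattice_compl[OF assms(1)] assms deriv_zetaW
    by (intro deriv_cong_ev eventually_nhds_in_open[THEN eventually_mono]) auto
  also have "\<dots> = - deriv (wpW \<tau>) b"
    using wpW_has_field_derivative[OF assms] by (subst deriv_minus) (auto simp: field_differentiable_def)
  finally have "((\<lambda>w. (zetaW \<tau> w - zetaW \<tau> b - (- wpW \<tau> b) * (w - b)) / (w - b)^2) \<longlongrightarrow>
      - deriv (wpW \<tau>) b / 2) (at b)"
    using holomorphic_second_order_limit[OF holomorphic_on_subset[OF zetaW_holomorphic[OF assms(1)] r(2)] r(1)]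
    by (simp add: deriv_zetaW[OF assms])
  from LIM_offset_zero[OF this] show ?thesis
    by (simp add: algebra_simps)
qed

lemma zetaW_reg_over_square_tendsto_0:
  assumes "Im \<tau> > 0"
  shows "((\<lambda>a. zetaW_reg \<tau> a / a^2) \<longlongrightarrow> 0) (at 0)"
proof -
  have U: "open (- (lattice \<tau> - {0}))" "0 \<in> - (lattice \<tau> - {0})"
    using open_lattice_nonzero_compl[OF assms] by auto
  then obtain r where r: "r > 0" "ball 0 r \<subseteq> - (lattice \<tau> - {0})"
    using open_contains_ball by blast
  have "deriv (deriv (zetaW_reg \<tau>)) 0 = deriv (\<lambda>w. - wpW_reg \<tau> w) 0"
    using U deriv_zetaW_reg[OF assms]
    by (intro deriv_cong_ev eventually_nhds_in_open[THEN eventually_mono]) auto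
  also have "\<dots> = 0"
    using wpW_reg_has_field_derivative(2)[OF assms, of 0] deriv_wpW_reg_0[OF assms]
    by (subst deriv_minus) (auto simp: field_differentiable_def)
  finally show ?thesis
    using holomorphic_second_order_limit[OF holomorphic_on_subset[OF zetaW_reg_holomorphic[OF assms] r(2)] r(1)]
    by (simp add: deriv_zetaW_reg[OF assms])
qed

lemma wpW_reg_over_tendsto_0:
  assumes "Im \<tau> > 0"
  shows "((\<lambda>a. wpW_reg \<tau> a / a) \<longlongrightarrow> 0) (at 0)"
proof -
  note reg = wpW_reg_has_field_derivative(2)[OF assms, of 0]
  have "(wpW_reg \<tau> has_field_derivative 0) (at 0)"
    using reg DERIV_imp_deriv[OF reg] deriv_wpW_reg_0[OF assms] by simp
  then show ?thesis
    by (simp add: has_field_derivative_iff)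
qed

lemma deriv_wpW_reg_tendsto_0:
  assumes "Im \<tau> > 0"
  shows "(deriv (wpW_reg \<tau>) \<longlongrightarrow> 0) (at 0)"
  using isCont_deriv_holomorphic[OF wpW_reg_holomorphic[OF assms] open_lattice_nonzero_compl[OF assms], of 0]
    deriv_wpW_reg_0[OF assms] by (simp add: isCont_def)

section \<open>The addition theorem for zeta\<close>

definition zeta_add_defect :: "complex \<Rightarrow> complex \<Rightarrow> complex \<Rightarrow> complex" where
  "zeta_add_defect \<tau> b a = (wpW \<tau> a - wpW \<tau> b) * (zetaW \<tau> (a + b) - zetaW \<tau> a - zetaW \<tau> b)
     - (deriv (wpW \<tau>) a - deriv (wpW \<tau>) b) / 2"

definition defect_sing :: "complex \<Rightarrow> complex \<Rightarrow> complex set" where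
  "defect_sing \<tau> b = {a. a \<in> lattice \<tau> \<or> a + b \<in> lattice \<tau>}"

lemma add_latt_in_defect_sing_iff [simp]: "a + latt \<tau> q \<in> defect_sing \<tau> b \<longleftrightarrow> a \<in> defect_sing \<tau> b"
  using add_latt_in_lattice_iff[of "a + b" \<tau> q] by (simp add: defect_sing_def algebra_simps)

lemma eventually_notin_defect_sing:
  assumes "Im \<tau> > 0"
  shows "\<forall>\<^sub>F x in at c. x \<notin> defect_sing \<tau> b"
proof -
  have "defect_sing \<tau> b \<inter> cball c 1 \<subseteq>
      latt \<tau> ` {p. norm (latt \<tau> p) \<le> norm c + 1} \<union>
      (\<lambda>p. latt \<tau> p - b) ` {p. norm (latt \<tau> p) \<le> norm c + 1 + norm b}"
  proof
    fix a assume a: "a \<in> defect_sing \<tau> b \<inter> cball c 1"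
    then have a_le: "norm a \<le> norm c + 1"
      using norm_triangle_ineq2[of a c] by (auto simp: dist_norm norm_minus_commute)
    show "a \<in> latt \<tau> ` {p. norm (latt \<tau> p) \<le> norm c + 1} \<union>
        (\<lambda>p. latt \<tau> p - b) ` {p. norm (latt \<tau> p) \<le> norm c + 1 + norm b}"
    proof (cases "a \<in> lattice \<tau>")
      case True
      then obtain p where "a = latt \<tau> p"
        by (auto simp: lattice_def)
      with a_le show ?thesis
        by auto
    next
      case False
      with a obtain p where p: "a + b = latt \<tau> p"
        by (auto simp: defect_sing_def lattice_def)
      then have "norm (latt \<tau> p) \<le> norm c + 1 + norm b"
        using a_le norm_triangle_ineq[of a b] by simp
      moreover have "a = latt \<tau> p - b"
        using p by (simp add: algebra_simps)
      ultimately show ?thesis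
        by blast
    qed
  qed
  then have "finite (defect_sing \<tau> b \<inter> cball c 1)"
    by (rule finite_subset) (simp add: finite_latt_bounded[OF assms])
  then have "\<not> c islimpt (defect_sing \<tau> b \<inter> cball c 1)"
    by (rule islimpt_finite)
  then have "\<forall>\<^sub>F x in at c. x \<notin> defect_sing \<tau> b \<inter> cball c 1"
    by (simp add: islimpt_iff_eventually)
  moreover have "\<forall>\<^sub>F x in at c. x \<in> ball c 1"
    by (rule eventually_at_in_open') auto
  ultimately show ?thesis
    by eventually_elim auto
qed

lemma zeta_add_defect_holomorphic:
  assumes "Im \<tau> > 0"
  shows "zeta_add_defect \<tau> b holomorphic_on - defect_sing \<tau> b"
proof -
  have L: "- defect_sing \<tau> b \<subseteq> - lattice \<tau>"
    by (auto simp: defect_sing_def)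
  have "(\<lambda>a. zetaW \<tau> (a + b)) holomorphic_on - defect_sing \<tau> b"
    using zetaW_holomorphic[OF assms]
    by (intro holomorphic_on_compose_gen[of "\<lambda>a. a + b" _ "zetaW \<tau>" "- lattice \<tau>", unfolded o_def] holomorphic_intros)
      (auto simp: defect_sing_def)
  moreover define wp_deriv where "wp_deriv = deriv (wpW \<tau>)"
  have "wp_deriv holomorphic_on - defect_sing \<tau> b"
    unfolding wp_deriv_def
    using holomorphic_on_subset[OF holomorphic_deriv[OF wpW_holomorphic[OF assms] open_lattice_compl[OF assms]] L] .
  ultimately show ?thesis
    unfolding zeta_add_defect_def[abs_def] wp_deriv_def[symmetric]
    using holomorphic_on_subset[OF wpW_holomorphic[OF assms] L]
      holomorphic_on_subset[OF zetaW_holomorphic[OF assms] L]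
    by (intro holomorphic_intros) simp_all
qed

lemma zeta_add_defect_periodic:
  assumes "Im \<tau> > 0" "a \<notin> defect_sing \<tau> b"
  shows "zeta_add_defect \<tau> b (a + latt \<tau> q) = zeta_add_defect \<tau> b a"
proof -
  have a: "a \<notin> lattice \<tau>" "a + b \<notin> lattice \<tau>"
    using assms(2) by (auto simp: defect_sing_def)
  obtain \<eta> where \<eta>: "\<And>z. z \<notin> lattice \<tau> \<Longrightarrow> zetaW \<tau> (z + latt \<tau> q) = zetaW \<tau> z + \<eta>"
    using zetaW_quasi_periodic[OF assms(1)] by blast
  have "zetaW \<tau> (a + latt \<tau> q + b) = zetaW \<tau> (a + b) + \<eta>"
    using \<eta>[OF a(2)] by (simp add: algebra_simps)
  moreover have "deriv (wpW \<tau>) (a + latt \<tau> q) = deriv (wpW \<tau>) a"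
    using a(1) assms(1) by (simp add: deriv_wpW wpW'_periodic)
  ultimately show ?thesis
    using wpW_periodic[OF assms(1) a(1)] \<eta>[OF a(1)] by (simp add: zeta_add_defect_def)
qed

lemma zeta_add_defect_tendsto_0:
  assumes "Im \<tau> > 0" "b \<notin> lattice \<tau>"
  shows "(zeta_add_defect \<tau> b \<longlongrightarrow> 0) (at 0)"
proof -
  define W where "W = wpW \<tau> b"
  define W' where "W' = deriv (wpW \<tau>) b"
  define A' where "A' = deriv (wpW_reg \<tau>)"
  define e1 where "e1 a = (zetaW \<tau> (a + b) - zetaW \<tau> b + W * a) / a^2" for a
  define e2 where "e2 a = zetaW_reg \<tau> a / a^2" for a
  define e3 where "e3 a = wpW_reg \<tau> a / a" for a
  txt \<open>The poles cancel; the remaining terms tend to -W'/2 - 0 - 0 - 0 + W'/2.\<close>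
  have "zeta_add_defect \<tau> b a = (e1 a - e2 a) - e3 a - A' a / 2 + W' / 2
      + a^3 * e3 a * (e1 a - e2 a) - W * a^2 * e3 a - W * a^2 * (e1 a - e2 a) + W^2 * a"
    if "a \<notin> defect_sing \<tau> b" "a \<noteq> 0" for a
  proof -
    have a: "a \<notin> lattice \<tau>"
      using that by (auto simp: defect_sing_def)
    have alg: "(1 / a^2 + a * x3 - W) * ((Zb - W * a + a^2 * x1) - (1 / a + a^2 * x2) - Zb)
        - ((-2 / a^3 + d) - W') / 2
        = (x1 - x2) - x3 - d / 2 + W' / 2
          + a^3 * x3 * (x1 - x2) - W * a^2 * x3 - W * a^2 * (x1 - x2) + W^2 * a" for x1 x2 x3 d Zb
      using that(2) by (simp add: field_simps) algebra
    have "zetaW \<tau> (a + b) = zetaW \<tau> b - W * a + a^2 * e1 a" "zetaW \<tau> a = 1 / a + a^2 * e2 a"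
      "wpW \<tau> a = 1 / a^2 + a * e3 a" "deriv (wpW \<tau>) a = -2 / a^3 + A' a"
      using that(2) deriv_wpW_eq[OF assms(1) a]
      by (simp_all add: e1_def e2_def e3_def zetaW_eq wpW_eq A'_def)
    then show ?thesis
      unfolding zeta_add_defect_def W_def[symmetric] W'_def[symmetric] by (simp only: alg)
  qed
  moreover have "\<forall>\<^sub>F a in at 0. a \<notin> defect_sing \<tau> b \<and> a \<noteq> 0"
    using eventually_notin_defect_sing[OF assms(1)] eventually_neq_at_within by (rule eventually_conj)
  ultimately have "\<forall>\<^sub>F a in at 0. (e1 a - e2 a) - e3 a - A' a / 2 + W' / 2
      + a^3 * e3 a * (e1 a - e2 a) - W * a^2 * e3 a - W * a^2 * (e1 a - e2 a) + W^2 * a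
      = zeta_add_defect \<tau> b a"
    by (auto elim: eventually_mono)
  moreover have "((\<lambda>a. (e1 a - e2 a) - e3 a - A' a / 2 + W' / 2
      + a^3 * e3 a * (e1 a - e2 a) - W * a^2 * e3 a - W * a^2 * (e1 a - e2 a) + W^2 * a) \<longlongrightarrow>
      (- W' / 2 - 0) - 0 - 0 / 2 + W' / 2 + 0^3 * 0 * (- W' / 2 - 0) - W * 0^2 * 0
      - W * 0^2 * (- W' / 2 - 0) + W^2 * 0) (at 0)"
    unfolding e1_def e2_def e3_def A'_def W_def W'_def
    by (intro tendsto_intros zetaW_second_order_limit zetaW_reg_over_square_tendsto_0
        wpW_reg_over_tendsto_0 deriv_wpW_reg_tendsto_0 assms) simp
  ultimately show ?thesis
    by (simp add: Lim_transform_eventually)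
qed

lemma zeta_add_defect_has_limit_at_uminus:
  assumes "Im \<tau> > 0" "b \<notin> lattice \<tau>"
  shows "\<exists>l. (zeta_add_defect \<tau> b \<longlongrightarrow> l) (at (- b))"
proof -
  have "- b \<notin> lattice \<tau>" "0 \<notin> lattice \<tau> - {0}"
    using assms(2) by auto
  define D where "D x = (wpW \<tau> x - wpW \<tau> (- b)) / (x - - b)" for x
  define E where "E x = D x + (wpW \<tau> x - wpW \<tau> (- b)) * (zetaW_reg \<tau> (x + b) - zetaW \<tau> x - zetaW \<tau> b)
      - (deriv (wpW \<tau>) x - deriv (wpW \<tau>) b) / 2" for x
  txt \<open>Near -b only the factor zetaW (x + b) is singular, and wpW x - wpW b vanishes there.\<close>
  have "zeta_add_defect \<tau> b x = E x" if "x \<notin> defect_sing \<tau> b" for x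
  proof -
    have "x + b \<noteq> 0"
      using that by (auto simp: defect_sing_def)
    then show ?thesis
      unfolding zeta_add_defect_def E_def D_def zetaW_eq[of _ "x + b"] wpW_even
      by (simp add: field_simps)
  qed
  with eventually_notin_defect_sing[OF assms(1), where c = "- b" and b = b]
  have "\<forall>\<^sub>F x in at (- b). E x = zeta_add_defect \<tau> b x"
    by (auto elim: eventually_mono)
  moreover have lim_D: "(D \<longlongrightarrow> wpW' \<tau> (- b)) (at (- b))"
    using wpW_has_field_derivative[OF assms(1) \<open>- b \<notin> lattice \<tau>\<close>]
    unfolding has_field_derivative_iff D_def[abs_def] .
  moreover have cont: "isCont (wpW \<tau>) (- b)" "isCont (zetaW \<tau>) (- b)" "isCont (deriv (wpW \<tau>)) (- b)"
    using DERIV_isCont[OF wpW_has_field_derivative[OF assms(1) \<open>- b \<notin> lattice \<tau>\<close>]]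
      DERIV_isCont[OF zetaW_has_field_derivative[OF assms(1) \<open>- b \<notin> lattice \<tau>\<close>]]
      isCont_deriv_holomorphic[OF wpW_holomorphic[OF assms(1)] open_lattice_compl[OF assms(1)], of "- b"]
      \<open>- b \<notin> lattice \<tau>\<close>
    by simp_all
  moreover have cont_reg: "isCont (\<lambda>x. zetaW_reg \<tau> (x + b)) (- b)"
  proof (rule isCont_o2[where f = "\<lambda>x. x + b"])
    show "isCont (\<lambda>x. x + b) (- b)"
      by (intro continuous_intros)
    show "isCont (zetaW_reg \<tau>) (- b + b)"
      using DERIV_isCont[OF zetaW_reg_has_field_derivative[OF assms(1) \<open>0 \<notin> lattice \<tau> - {0}\<close>]]
      by simp
  qed
  moreover have "(E \<longlongrightarrow> wpW' \<tau> (- b) + (wpW \<tau> (- b) - wpW \<tau> (- b))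
      * (zetaW_reg \<tau> (- b + b) - zetaW \<tau> (- b) - zetaW \<tau> b)
      - (deriv (wpW \<tau>) (- b) - deriv (wpW \<tau>) b) / 2) (at (- b))"
    unfolding E_def[abs_def]
    by (intro tendsto_intros lim_D cont[unfolded isCont_def] cont_reg[unfolded isCont_def]) simp
  ultimately show ?thesis
    using Lim_transform_eventually by blast
qed

lemma zeta_add_defect_tendsto_shift:
  assumes "Im \<tau> > 0" "(zeta_add_defect \<tau> b \<longlongrightarrow> l) (at c)"
  shows "(zeta_add_defect \<tau> b \<longlongrightarrow> l) (at (c + latt \<tau> q))"
proof (rule tendsto_shift_periodic[OF assms(2)])
  have "zeta_add_defect \<tau> b (x - latt \<tau> q) = zeta_add_defect \<tau> b x" if "x \<notin> defect_sing \<tau> b" for x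
    using zeta_add_defect_periodic[OF assms(1), of "x - latt \<tau> q" b q] that
      add_latt_in_defect_sing_iff[of "x - latt \<tau> q" \<tau> q b] by simp
  then show "\<forall>\<^sub>F x in at (c + latt \<tau> q). zeta_add_defect \<tau> b (x - latt \<tau> q) = zeta_add_defect \<tau> b x"
    using eventually_notin_defect_sing[OF assms(1), where c = "c + latt \<tau> q" and b = b]
    by (auto elim: eventually_mono)
qed

lemma zeta_add_defect_has_limit:
  assumes "Im \<tau> > 0" "b \<notin> lattice \<tau>" "c \<in> defect_sing \<tau> b"
  shows "\<exists>l. (zeta_add_defect \<tau> b \<longlongrightarrow> l) (at c)"
proof (cases "c \<in> lattice \<tau>")
  case True
  then obtain q where "c = 0 + latt \<tau> q"
    by (auto simp: lattice_def)
  then show ?thesis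
    using zeta_add_defect_tendsto_shift[OF assms(1) zeta_add_defect_tendsto_0[OF assms(1,2)]] by blast
next
  case False
  with assms(3) obtain q where "c = - b + latt \<tau> q"
    by (auto simp: defect_sing_def lattice_def algebra_simps)
  then show ?thesis
    using zeta_add_defect_has_limit_at_uminus[OF assms(1,2)] zeta_add_defect_tendsto_shift[OF assms(1)]
    by blast
qed

theorem zeta_add_defect_eq_0:
  assumes "Im \<tau> > 0" "b \<notin> lattice \<tau>" "a \<notin> defect_sing \<tau> b"
  shows "zeta_add_defect \<tau> b a = 0"
proof -
  obtain g where g: "g holomorphic_on UNIV" "\<And>c. (zeta_add_defect \<tau> b \<longlongrightarrow> g c) (at c)"
      "\<And>c. c \<notin> defect_sing \<tau> b \<Longrightarrow> g c = zeta_add_defect \<tau> b c"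
    using holomorphic_extension_by_limits[OF zeta_add_defect_holomorphic[OF assms(1)]
        eventually_notin_defect_sing[OF assms(1)] zeta_add_defect_has_limit[OF assms(1,2)]]
    by blast
  have "g (c + latt \<tau> q) = g c" for c q
    using zeta_add_defect_tendsto_shift[OF assms(1) g(2)] g(2) tendsto_unique[OF trivial_limit_at] by blast
  then have "g a = g 0"
    by (rule entire_lattice_periodic_constant[OF assms(1) g(1)])
  also have "g 0 = 0"
    using g(2) zeta_add_defect_tendsto_0[OF assms(1,2)] tendsto_unique[OF trivial_limit_at] by blast
  finally show ?thesis
    using g(3)[OF assms(3)] by simp
qed

section \<open>Cyclic symmetry\<close>

lemma zeta_odd: "zeta \<tau> (- z) = - zeta \<tau> z"
  by (simp add: zeta_def zetaW_odd)

lemma wp'_eq_deriv_wpW: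
  assumes "Im \<tau> > 0" "z \<notin> lattice \<tau>"
  shows "wp' \<tau> z = deriv (wpW \<tau>) z"
proof -
  have "(wp \<tau> has_field_derivative wpW' \<tau> z) (at z)"
    using DERIV_add[OF wpW_has_field_derivative[OF assms] DERIV_const[of "G2 \<tau>"]]
    by (simp add: wp_def[abs_def])
  then show ?thesis
    using deriv_wpW[OF assms] by (simp add: wp'_def DERIV_imp_deriv)
qed

theorem lemma10p2:
  fixes \<tau> x y z :: complex
  assumes "Im \<tau> > 0"
    and "\<forall>p. x - y \<noteq> latt \<tau> p"
    and "\<forall>p. y - z \<noteq> latt \<tau> p"
    and "\<forall>p. z - x \<noteq> latt \<tau> p"
  shows "frakZ \<tau> x y z = frakZ \<tau> y z x"
proof -
  define a b where "a = x - y" and "b = y - z"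
  have "z - x = - (a + b)"
    by (simp add: a_def b_def)
  have "a \<notin> lattice \<tau>" "b \<notin> lattice \<tau>" "z - x \<notin> lattice \<tau>"
    using assms(2-4) by (auto simp: lattice_def a_def b_def)
  then have "a + b \<notin> lattice \<tau>"
    using uminus_in_lattice_iff[of "a + b" \<tau>] unfolding \<open>z - x = - (a + b)\<close> by blast
  with \<open>a \<notin> lattice \<tau>\<close> have "a \<notin> defect_sing \<tau> b"
    by (simp add: defect_sing_def)
  have "frakZ \<tau> x y z - frakZ \<tau> y z x
      = (wp \<tau> a - wp \<tau> b) * (zeta \<tau> a + zeta \<tau> b - zeta \<tau> (a + b)) + (wp' \<tau> a - wp' \<tau> b) / 2"
    unfolding frakZ_def a_def[symmetric] b_def[symmetric] \<open>z - x = - (a + b)\<close> zeta_odd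
    by (simp add: algebra_simps diff_divide_distrib)
  also have "\<dots> = - zeta_add_defect \<tau> b a"
    using wp'_eq_deriv_wpW[OF assms(1) \<open>a \<notin> lattice \<tau>\<close>] wp'_eq_deriv_wpW[OF assms(1) \<open>b \<notin> lattice \<tau>\<close>]
    by (simp add: zeta_add_defect_def wp_def zeta_def algebra_simps)
  also have "\<dots> = 0"
    using zeta_add_defect_eq_0[OF assms(1) \<open>b \<notin> lattice \<tau>\<close> \<open>a \<notin> defect_sing \<tau> b\<close>] by simp
  finally show ?thesis
    by simp
qed

end
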